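(* Let $\Gamma$ be a modular pattern. There is an integer $m$ such that whenever two ideal triangles $\tau_1,\tau_2$ of the modular tiling have combinatorial distance at least $m$, at most one geodesic of $\Gamma$ intersects both $\tau_1$ and $\tau_2$.
   Context: A modular pattern is a $PSL_2(\mathbb Z)$-invariant collection $\Gamma$ of complete geodesics in $\mathbf H^2$ with finitely many $PSL_2(\mathbb Z)$-orbits, each geodesic stabilized by an infinite-order subgroup of $PSL_2(\mathbb Z)$. The modular tiling $T$ is the $PSL_2(\mathbb Z)$-invariant tiling of $\mathbf H^2$ by ideal triangles generated by reflections in the sides of the ideal triangle with vertices $0,1,\infty$ (upper half-plane). The combinatorial distance between two ideal triangles of $T$ is the number of edges of $T$ crossed by the geodesic segment joining their centers. *)

theory Defs
  imports Complex_Main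
begin

definition uhp :: "complex set" where
  "uhp = {z. 0 < Im z}"

definition hdist :: "complex \<Rightarrow> complex \<Rightarrow> real" where
  "hdist z w = arcosh (1 + (cmod (z - w))^2 / (2 * Im z * Im w))"

definition hseg :: "complex \<Rightarrow> complex \<Rightarrow> complex set" where
  "hseg z w = {u \<in> uhp. hdist z u + hdist u w = hdist z w}"

definition vline :: "real \<Rightarrow> complex set" where
  "vline a = {z \<in> uhp. Re z = a}"

definition hcirc :: "real \<Rightarrow> real \<Rightarrow> complex set" where
  "hcirc c r = {z \<in> uhp. cmod (z - complex_of_real c) = r}"

definition complete_geodesic :: "complex set \<Rightarrow> bool" where
  "complete_geodesic L \<longleftrightarrow> (\<exists>a. L = vline a) \<or> (\<exists>c r. 0 < r \<and> L = hcirc c r)"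

text \<open>Elements of SL(2,Z) as integer quadruples (a,b,c,d); PSL(2,Z) acts through them.\<close>
type_synonym imat = "int \<times> int \<times> int \<times> int"

definition SL2Z :: "imat set" where
  "SL2Z = {(a,b,c,d). a * d - b * c = 1}"

fun mob :: "imat \<Rightarrow> complex \<Rightarrow> complex" where
  "mob (a,b,c,d) z = (of_int a * z + of_int b) / (of_int c * z + of_int d)"

text \<open>PSL(2,Z) = SL(2,Z)/{+-I}; an element g stabilizes a set when its Moebius map does.\<close>
definition stabilizer :: "complex set \<Rightarrow> imat set" where
  "stabilizer L = {g \<in> SL2Z. mob g ` L = L}"

definition modular_pattern :: "complex set set \<Rightarrow> bool" where
  "modular_pattern \<Gamma> \<longleftrightarrow>
     (\<forall>L\<in>\<Gamma>. complete_geodesic L) \<and>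
     (\<forall>g\<in>SL2Z. \<forall>L\<in>\<Gamma>. mob g ` L \<in> \<Gamma>) \<and>
     (\<exists>F. finite F \<and> F \<subseteq> \<Gamma> \<and> (\<forall>L\<in>\<Gamma>. \<exists>g\<in>SL2Z. \<exists>K\<in>F. L = mob g ` K)) \<and>
     (\<forall>L\<in>\<Gamma>. infinite (stabilizer L))"

text \<open>The (closed) ideal triangle with vertices 0, 1, infinity and its three sides.\<close>
definition T0 :: "complex set" where
  "T0 = {z \<in> uhp. 0 \<le> Re z \<and> Re z \<le> 1 \<and> cmod (z - complex_of_real (1/2)) \<ge> 1/2}"

definition T0_sides :: "complex set set" where
  "T0_sides = {vline 0, vline 1, hcirc (1/2) (1/2)}"

definition T0_center :: complex where
  "T0_center = Complex (1/2) (sqrt 3 / 2)"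

definition reflV :: "real \<Rightarrow> complex \<Rightarrow> complex" where
  "reflV a z = complex_of_real (2 * a) - cnj z"

definition reflC :: "real \<Rightarrow> real \<Rightarrow> complex \<Rightarrow> complex" where
  "reflC c r z = complex_of_real c + complex_of_real (r^2) / cnj (z - complex_of_real c)"

definition T0_reflections :: "(complex \<Rightarrow> complex) set" where
  "T0_reflections = {reflV 0, reflV 1, reflC (1/2) (1/2)}"

inductive_set refl_group :: "(complex \<Rightarrow> complex) set" where
  id_in: "id \<in> refl_group"
| step: "f \<in> refl_group \<Longrightarrow> r \<in> T0_reflections \<Longrightarrow> f \<circ> r \<in> refl_group"

text \<open>Tiles of the modular tiling are the sets f ` T0 with f in the reflection group,
  with center f T0_center; its edges are the complete geodesics f ` (side of T0).\<close>
definition tiling_edges :: "complex set set" where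
  "tiling_edges = {f ` S | f S. f \<in> refl_group \<and> S \<in> T0_sides}"

definition comb_dist :: "(complex \<Rightarrow> complex) \<Rightarrow> (complex \<Rightarrow> complex) \<Rightarrow> nat" where
  "comb_dist f1 f2 =
     card {E \<in> tiling_edges. E \<inter> hseg (f1 T0_center) (f2 T0_center) \<noteq> {}}"

end

(*
  The geodesics of a modular pattern are axes of hyperbolic elements of SL(2,Z). As there are
  finitely many orbits, each one is the zero set of an integral form A |z|^2 + B Re z + C whose
  discriminant t^2 - 4 is bounded, t being a trace. The imaginary axis is an edge of the tiling
  and every tile lies in one of its closed half-planes. So if a geodesic meets two tiles and the
  segment joining their centers crosses the edge M(imaginary axis), moving that edge back by the
  inverse of M leaves a geodesic with points on both sides of the axis, i.e. the transformed form
  has A C <= 0; together with the discriminant bound this confines it to a finite box. Distinct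
  geodesics of the pattern have no common stabilizer besides +-1, so the pair of transformed
  forms of two such geodesics determines the crossed edge, and the number of crossed edges is at
  most the square of the size of the box.
*)
theory Submission
  imports Defs
begin

fun imat_mult :: "imat \<Rightarrow> imat \<Rightarrow> imat" where
  "imat_mult (a,b,c,d) (e,f,g,h) = (a*e+b*g, a*f+b*h, c*e+d*g, c*f+d*h)"

fun imat_adj :: "imat \<Rightarrow> imat" where
  "imat_adj (a,b,c,d) = (d,-b,-c,a)"

fun imat_trace :: "imat \<Rightarrow> int" where
  "imat_trace (a,b,c,d) = a + d"

fun imat_uminus :: "imat \<Rightarrow> imat" where
  "imat_uminus (a,b,c,d) = (-a,-b,-c,-d)"

lemma SL2Z_det_real:
  "(a,b,c,d) \<in> SL2Z \<Longrightarrow> real_of_int a * of_int d - of_int b * of_int c = 1"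
  by (simp add: SL2Z_def) (metis of_int_1 of_int_diff of_int_mult)

lemma imat_mult_SL2Z:
  assumes "M \<in> SL2Z" "N \<in> SL2Z"
  shows "imat_mult M N \<in> SL2Z"
proof -
  obtain a b c d where M: "M = (a,b,c,d)" by (cases M)
  obtain e f g h where N: "N = (e,f,g,h)" by (cases N)
  have "(a*e+b*g)*(c*f+d*h) - (a*f+b*h)*(c*e+d*g) = (a*d-b*c)*(e*h-f*g)"
    by algebra
  then show ?thesis using assms by (simp add: M N SL2Z_def)
qed

lemma imat_adj_SL2Z: "M \<in> SL2Z \<Longrightarrow> imat_adj M \<in> SL2Z"
  by (cases M) (simp add: SL2Z_def algebra_simps)

lemma imat_mult_assoc: "imat_mult (imat_mult A B) C = imat_mult A (imat_mult B C)"
  by (cases A; cases B; cases C) (simp add: algebra_simps)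

lemma imat_mult_id_right [simp]: "imat_mult M (1,0,0,1) = M"
  by (cases M) simp

lemma imat_mult_minus_id: "imat_mult M (-1,0,0,-1) = imat_uminus M"
  by (cases M) simp

lemma imat_mult_adj: "M \<in> SL2Z \<Longrightarrow> imat_mult M (imat_adj M) = (1,0,0,1)"
  by (cases M) (simp add: SL2Z_def algebra_simps)

lemma imat_adj_mult: "M \<in> SL2Z \<Longrightarrow> imat_mult (imat_adj M) M = (1,0,0,1)"
  by (cases M) (simp add: SL2Z_def algebra_simps)

lemma imat_adj_mult_cancel_left: "M \<in> SL2Z \<Longrightarrow> imat_mult (imat_adj M) (imat_mult M N) = N"
  by (simp add: imat_mult_assoc[symmetric] imat_adj_mult) (cases N; simp)

lemma imat_trace_conj:
  assumes "g \<in> SL2Z"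
  shows "imat_trace (imat_mult (imat_mult g h) (imat_adj g)) = imat_trace h"
proof -
  obtain a b c d where g: "g = (a,b,c,d)" by (cases g)
  obtain e f k l where h: "h = (e,f,k,l)" by (cases h)
  have "(a*e+b*k)*d + (a*f+b*l)*(-c) + ((c*e+d*k)*(-b) + (c*f+d*l)*a) = (a*d-b*c)*(e+l)"
    by algebra
  then show ?thesis using assms by (simp add: g h SL2Z_def)
qed

definition mob_den :: "imat \<Rightarrow> complex \<Rightarrow> real" where
  "mob_den M z = (case M of (a,b,c,d) \<Rightarrow> (of_int c * Re z + of_int d)^2 + (of_int c * Im z)^2)"

lemma mob_den_eq_cmod: "mob_den (a,b,c,d) z = (cmod (of_int c * z + of_int d))^2"
  by (simp add: mob_den_def cmod_def)

lemma mob_den_pos: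
  assumes "M \<in> SL2Z" "Im z > 0"
  shows "mob_den M z > 0"
proof (cases M)
  case (fields a b c d)
  show ?thesis
  proof (cases "c = 0")
    case True
    then have "d \<noteq> 0" using assms(1) fields by (auto simp: SL2Z_def)
    then show ?thesis using True fields by (simp add: mob_den_def)
  next
    case False
    then have "(of_int c * Im z)^2 > 0" using assms(2) by simp
    then show ?thesis using fields by (simp add: mob_den_def add_nonneg_pos)
  qed
qed

lemma mob_denom_nonzero:
  assumes "(a,b,c,d) \<in> SL2Z" "Im z > 0"
  shows "of_int c * z + of_int d \<noteq> 0"
  using mob_den_pos[OF assms] by (auto simp: mob_den_eq_cmod)

lemma Re_mob:
  assumes "mob_den (a,b,c,d) z \<noteq> 0"
  shows "Re (mob (a,b,c,d) z) = (of_int a * of_int c * ((Re z)^2 + (Im z)^2)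
           + (of_int a * of_int d + of_int b * of_int c) * Re z + of_int b * of_int d) / mob_den (a,b,c,d) z"
  using assms by (simp add: mob_den_def Re_divide field_simps power2_eq_square)

lemma Im_mob:
  assumes "(a,b,c,d) \<in> SL2Z" "Im z > 0"
  shows "Im (mob (a,b,c,d) z) = Im z / mob_den (a,b,c,d) z"
proof -
  have "mob_den (a,b,c,d) z \<noteq> 0" using mob_den_pos[OF assms] by simp
  then have "Im (mob (a,b,c,d) z) = (of_int a * of_int d - of_int b * of_int c) * Im z / mob_den (a,b,c,d) z"
    by (simp add: mob_den_def Im_divide field_simps power2_eq_square)
  then show ?thesis using SL2Z_det_real[OF assms(1)] by simp
qed

lemma Im_mob_pos: "M \<in> SL2Z \<Longrightarrow> Im z > 0 \<Longrightarrow> Im (mob M z) > 0"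
  by (cases M) (metis Im_mob mob_den_pos divide_pos_pos)

lemma mob_uhp: "M \<in> SL2Z \<Longrightarrow> z \<in> uhp \<Longrightarrow> mob M z \<in> uhp"
  using Im_mob_pos by (simp add: uhp_def)

lemma mob_imat_mult:
  assumes "M \<in> SL2Z" "N \<in> SL2Z" "Im z > 0"
  shows "mob M (mob N z) = mob (imat_mult M N) z"
proof -
  obtain a b c d where M: "M = (a,b,c,d)" by (cases M)
  obtain e f g h where N: "N = (e,f,g,h)" by (cases N)
  have n1: "of_int g * z + of_int h \<noteq> 0" using mob_denom_nonzero assms N by blast
  have "of_int c * mob N z + of_int d \<noteq> 0"
    using mob_denom_nonzero[of a b c d "mob N z"] Im_mob_pos[OF assms(2,3)] assms(1) M by blast
  then have n2: "of_int c * (of_int e * z + of_int f) + of_int d * (of_int g * z + of_int h) \<noteq> 0"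
    using n1 by (simp add: N field_simps)
  show ?thesis using n1 n2 by (simp add: M N divide_simps) algebra
qed

lemma mob_adj_left: "M \<in> SL2Z \<Longrightarrow> Im z > 0 \<Longrightarrow> mob (imat_adj M) (mob M z) = z"
  by (simp add: mob_imat_mult imat_adj_SL2Z imat_adj_mult)

lemma mob_adj_right: "M \<in> SL2Z \<Longrightarrow> Im z > 0 \<Longrightarrow> mob M (mob (imat_adj M) z) = z"
  by (simp add: mob_imat_mult imat_adj_SL2Z imat_mult_adj)

lemma mob_imat_uminus: "mob (imat_uminus M) = mob M"
proof
  fix z
  obtain a b c d where "M = (a,b,c,d)" by (cases M)
  moreover have "(- (complex_of_int a * z) - of_int b) / (- (of_int c * z) - of_int d)
      = (of_int a * z + of_int b) / (of_int c * z + of_int d)"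
    by (metis minus_diff_eq diff_minus_eq_add minus_divide_divide add.commute)
  ultimately show "mob (imat_uminus M) z = mob M z" by simp
qed

lemma image_mob_imat_mult:
  assumes "M \<in> SL2Z" "N \<in> SL2Z" "A \<subseteq> uhp"
  shows "mob M ` mob N ` A = mob (imat_mult M N) ` A"
proof -
  have "mob M (mob N z) = mob (imat_mult M N) z" if "z \<in> A" for z
    using mob_imat_mult[OF assms(1,2)] that assms(3) by (auto simp: uhp_def)
  then show ?thesis by (simp add: image_image cong: image_cong)
qed

section \<open>Binary quadratic forms and the geodesics they cut out\<close>

text \<open>A triple \<open>(A,B,C)\<close> is read both as the binary quadratic form \<open>A x\<^sup>2 + B x y + C y\<^sup>2\<close>,
  on which \<open>form_act\<close> is the right action of SL(2,Z), and as the function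
  \<open>A \<bar>z\<bar>\<^sup>2 + B Re z + C\<close> on the upper half-plane, whose zero set is a geodesic when the
  discriminant is positive; \<open>form_eval_mob\<close> relates the two readings.\<close>

fun form_act :: "('a::comm_ring_1) \<times> 'a \<times> 'a \<Rightarrow> imat \<Rightarrow> 'a \<times> 'a \<times> 'a" where
  "form_act (A,B,C) (a,b,c,d) =
    (A*of_int a^2 + B*of_int a*of_int c + C*of_int c^2,
     2*A*of_int a*of_int b + B*(of_int a*of_int d + of_int b*of_int c) + 2*C*of_int c*of_int d,
     A*of_int b^2 + B*of_int b*of_int d + C*of_int d^2)"

fun form_disc :: "('a::comm_ring_1) \<times> 'a \<times> 'a \<Rightarrow> 'a" where
  "form_disc (A,B,C) = B^2 - 4*A*C"

fun form_scale :: "real \<Rightarrow> real \<times> real \<times> real \<Rightarrow> real \<times> real \<times> real" where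
  "form_scale k (A,B,C) = (k*A, k*B, k*C)"

fun of_int_form :: "int \<times> int \<times> int \<Rightarrow> real \<times> real \<times> real" where
  "of_int_form (A,B,C) = (of_int A, of_int B, of_int C)"

fun form_eval :: "real \<times> real \<times> real \<Rightarrow> complex \<Rightarrow> real" where
  "form_eval (A,B,C) z = A*((Re z)^2 + (Im z)^2) + B * Re z + C"

definition form_locus :: "real \<times> real \<times> real \<Rightarrow> complex set" where
  "form_locus Q = {z \<in> uhp. form_eval Q z = 0}"

lemma form_act_of_int: "form_act (of_int_form Q) M = of_int_form (form_act Q M)"
  by (cases Q; cases M) simp

lemma form_disc_of_int: "form_disc (of_int_form Q) = of_int (form_disc Q)"
  by (cases Q) simp

lemma form_act_imat_mult: "form_act Q (imat_mult M N) = form_act (form_act Q M) N"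
  by (cases Q; cases M; cases N) (simp add: algebra_simps power2_eq_square)

lemma form_act_id [simp]: "form_act Q (1,0,0,1) = Q"
  by (cases Q) simp

lemma form_act_scale: "form_act (form_scale k Q) M = form_scale k (form_act Q M)"
  by (cases Q; cases M) (simp add: algebra_simps)

lemma form_disc_scale: "form_disc (form_scale k Q) = k^2 * form_disc Q"
  by (cases Q) (simp add: algebra_simps power2_eq_square)

lemma form_disc_act:
  fixes Q :: "'a::comm_ring_1 \<times> 'a \<times> 'a"
  assumes "M \<in> SL2Z"
  shows "form_disc (form_act Q M) = form_disc Q"
proof -
  obtain A B C where Q: "Q = (A,B,C)" by (cases Q)
  obtain a b c d where M: "M = (a,b,c,d)" by (cases M)
  have "form_disc (form_act (A,B,C) (a,b,c,d)) = of_int (a*d-b*c)^2 * form_disc (A,B,C)"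
    by (simp add: algebra_simps power2_eq_square)
  moreover have "a*d - b*c = 1" using assms by (simp add: M SL2Z_def)
  ultimately show ?thesis by (simp add: Q M)
qed

lemma form_eval_scale: "form_eval (form_scale k Q) z = k * form_eval Q z"
  by (cases Q) (simp add: algebra_simps)

lemma form_locus_scale: "k \<noteq> 0 \<Longrightarrow> form_locus (form_scale k Q) = form_locus Q"
  by (simp add: form_locus_def form_eval_scale)

lemma form_eval_mob:
  assumes "M \<in> SL2Z" "Im z > 0"
  shows "form_eval Q (mob M z) * mob_den M z = form_eval (form_act Q M) z"
proof -
  obtain a b c d where M: "M = (a,b,c,d)" by (cases M)
  obtain A B C where Q: "Q = (A,B,C)" by (cases Q)
  define x where "x = Re z"
  define y where "y = Im z"
  define Dn where "Dn = mob_den M z"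
  have det: "real_of_int a * of_int d - of_int b * of_int c = 1"
    using SL2Z_det_real assms(1) M by blast
  have Dn0: "Dn \<noteq> 0" using mob_den_pos[OF assms] by (simp add: Dn_def)
  have Dn_eq: "Dn = (of_int c * x + of_int d)^2 + (of_int c * y)^2"
    by (simp add: Dn_def M x_def y_def mob_den_def)
  have Re_w: "Re (mob M z) = (of_int a * of_int c * (x^2 + y^2) + (of_int a * of_int d + of_int b * of_int c) * x + of_int b * of_int d) / Dn"
    using Re_mob Dn0 by (simp add: M Dn_def x_def y_def)
  have Im_w: "Im (mob M z) = y / Dn"
    using Im_mob assms by (simp add: M Dn_def y_def)
  \<comment> \<open>\<open>\<bar>mob M z\<bar>\<^sup>2 = \<bar>a z + b\<bar>\<^sup>2 / \<bar>c z + d\<bar>\<^sup>2\<close>, in coordinates\<close>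
  have "(Re (mob M z))^2 + (Im (mob M z))^2
      = ((of_int a * of_int c * (x^2 + y^2) + (of_int a * of_int d + of_int b * of_int c) * x + of_int b * of_int d)^2
         + ((of_int a * of_int d - of_int b * of_int c) * y)^2) / Dn^2"
    unfolding Re_w Im_w det by (simp add: power_divide add_divide_distrib[symmetric])
  also have "\<dots> = ((of_int a * x + of_int b)^2 + (of_int a * y)^2) * Dn / Dn^2"
    unfolding Dn_eq by (rule arg_cong[where f = "\<lambda>t. t / _"]) algebra
  also have "\<dots> = ((of_int a * x + of_int b)^2 + (of_int a * y)^2) / Dn"
    using Dn0 by (simp add: power2_eq_square)
  finally have abs_w: "(Re (mob M z))^2 + (Im (mob M z))^2 = ((of_int a * x + of_int b)^2 + (of_int a * y)^2) / Dn" .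
  have "form_eval Q (mob M z) * Dn
      = A * (((Re (mob M z))^2 + (Im (mob M z))^2) * Dn) + B * (Re (mob M z) * Dn) + C * Dn"
    unfolding Q form_eval.simps by (simp add: algebra_simps)
  also have "\<dots> = A * ((of_int a * x + of_int b)^2 + (of_int a * y)^2)
      + B * (of_int a * of_int c * (x^2 + y^2) + (of_int a * of_int d + of_int b * of_int c) * x + of_int b * of_int d)
      + C * Dn"
    by (simp only: abs_w) (simp add: Re_w Dn0)
  also have "\<dots> = form_eval (form_act Q M) z"
    unfolding Q M form_act.simps form_eval.simps Dn_eq x_def y_def by algebra
  finally show ?thesis unfolding Dn_def .
qed

lemma form_locus_mob_image:
  assumes "N \<in> SL2Z"
  shows "mob N ` form_locus (form_act Q N) = form_locus Q"
proof
  show "mob N ` form_locus (form_act Q N) \<subseteq> form_locus Q"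
  proof
    fix w assume "w \<in> mob N ` form_locus (form_act Q N)"
    then obtain z where z: "z \<in> form_locus (form_act Q N)" "w = mob N z" by auto
    have zi: "Im z > 0" using z(1) by (simp add: form_locus_def uhp_def)
    have "form_eval Q (mob N z) * mob_den N z = 0"
      using form_eval_mob[OF assms zi, of Q] z(1) by (simp add: form_locus_def)
    then show "w \<in> form_locus Q"
      using mob_den_pos[OF assms zi] z(2) mob_uhp[OF assms] zi by (simp add: form_locus_def uhp_def)
  qed
next
  show "form_locus Q \<subseteq> mob N ` form_locus (form_act Q N)"
  proof
    fix w assume w: "w \<in> form_locus Q"
    have wi: "Im w > 0" using w by (simp add: form_locus_def uhp_def)
    let ?z = "mob (imat_adj N) w"
    have zi: "Im ?z > 0" using Im_mob_pos[OF imat_adj_SL2Z[OF assms] wi] .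
    have e: "mob N ?z = w" using mob_adj_right[OF assms wi] .
    have "form_eval (form_act Q N) ?z = 0"
      using form_eval_mob[OF assms zi, of Q] e w by (simp add: form_locus_def)
    then have "?z \<in> form_locus (form_act Q N)" using zi by (simp add: form_locus_def uhp_def)
    then show "w \<in> mob N ` form_locus (form_act Q N)" using e by force
  qed
qed

lemma vline_eq_form_locus: "vline a = form_locus (0,1,-a)"
  by (auto simp: vline_def form_locus_def)

lemma hcirc_eq_form_locus:
  assumes "r > 0"
  shows "hcirc c r = form_locus (1, -2*c, c^2 - r^2)"
proof -
  have "cmod (z - complex_of_real c) = r \<longleftrightarrow> (Re z - c)^2 + (Im z)^2 = r^2" for z
  proof -
    have "cmod (z - complex_of_real c) = sqrt ((Re z - c)^2 + (Im z)^2)"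
      by (simp add: cmod_def)
    then show ?thesis using assms
      by (metis abs_of_pos real_sqrt_abs sum_power2_ge_zero real_sqrt_pow2)
  qed
  then show ?thesis
    by (auto simp: hcirc_def form_locus_def algebra_simps power2_eq_square)
qed

lemma complete_geodesic_form_locus:
  assumes "complete_geodesic L"
  obtains G p1 p2 where "L = form_locus G" "form_disc G > 0" "p1 \<in> L" "p2 \<in> L" "p1 \<noteq> p2"
proof -
  note result = that
  consider a where "L = vline a" | c r where "r > 0" "L = hcirc c r"
    using assms unfolding complete_geodesic_def by blast
  then show thesis
  proof cases
    case (1 a)
    moreover have "Complex a 1 \<in> vline a" "Complex a 2 \<in> vline a"
      by (simp_all add: vline_def uhp_def)
    ultimately have "L = form_locus (0,1,-a)" "Complex a 1 \<in> L" "Complex a 2 \<in> L"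
      by (simp_all add: vline_eq_form_locus)
    then show thesis by (intro result[of "(0,1,-a)" "Complex a 1" "Complex a 2"]) auto
  next
    case (2 c r)
    then have L: "L = form_locus (1, -2*c, c^2 - r^2)" using hcirc_eq_form_locus by simp
    moreover have "Complex c r \<in> L" "Complex (c + 3*r/5) (4*r/5) \<in> L"
      using \<open>r > 0\<close> unfolding L by (auto simp: form_locus_def uhp_def algebra_simps power2_eq_square)
    moreover have "form_disc (1, -2*c, c^2 - r^2) > 0" using \<open>r > 0\<close> by (simp add: algebra_simps power2_eq_square)
    moreover have "Complex c r \<noteq> Complex (c + 3*r/5) (4*r/5)" using \<open>r > 0\<close> by simp
    ultimately show thesis using result[of "(1, -2*c, c^2 - r^2)" "Complex c r" "Complex (c + 3*r/5) (4*r/5)"] by blast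
  qed
qed

section \<open>Stabilizers of geodesics\<close>

text \<open>The fixed points of \<open>z \<mapsto> (a z + b)/(c z + d)\<close> are the roots of \<open>c z\<^sup>2 + (d - a) z - b\<close>,
  so \<open>fixed_form g\<close> cuts out the axis of a hyperbolic \<open>g\<close>.\<close>
fun fixed_form :: "imat \<Rightarrow> int \<times> int \<times> int" where
  "fixed_form (a,b,c,d) = (-c, a-d, b)"

lemma form_disc_fixed_form: "g \<in> SL2Z \<Longrightarrow> form_disc (fixed_form g) = (imat_trace g)^2 - 4"
  by (cases g) (simp add: SL2Z_def algebra_simps power2_eq_square)

lemma proportional_of_cross_eq_zero:
  fixes A B C p q r :: real
  assumes "B*r = C*q" "C*p = A*r" "A*q = B*p" "(p,q,r) \<noteq> (0,0,0)"
  shows "\<exists>m. A = m*p \<and> B = m*q \<and> C = m*r"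
proof -
  consider "p \<noteq> 0" | "q \<noteq> 0" | "r \<noteq> 0" using assms(4) by auto
  then show ?thesis
  proof cases
    case 1 show ?thesis
      by (rule exI[of _ "A/p"]) (use 1 assms in \<open>auto simp: field_simps\<close>)
  next
    case 2 show ?thesis
      by (rule exI[of _ "B/q"]) (use 2 assms in \<open>auto simp: field_simps\<close>)
  next
    case 3 show ?thesis
      by (rule exI[of _ "C/r"]) (use 3 assms in \<open>auto simp: field_simps\<close>)
  qed
qed

lemma form_act_fixed_cross_eqs:
  fixes A B C a b c d :: real
  assumes "a*d - b*c = 1"
    and "A*a^2 + B*a*c + C*c^2 = A"
    and "2*A*a*b + B*(a*d+b*c) + 2*C*c*d = B"
    and "A*b^2 + B*b*d + C*d^2 = C"
  shows "B*b = C*(a-d)" "C*(-c) = A*b" "A*(a-d) = B*(-c)"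
proof -
  have "2*(B*b - C*(a-d)) = a*2*((A*b^2 + B*b*d + C*d^2) - C)
      - b*((2*A*a*b + B*(a*d+b*c) + 2*C*c*d) - B) - (a*d-b*c-1)*(B*b+2*C*d)"
    by algebra
  then show "B*b = C*(a-d)" using assms by simp
  have "2*(C*c + A*b) = a*((2*A*a*b + B*(a*d+b*c) + 2*C*c*d) - B)
      - 2*b*((A*a^2 + B*a*c + C*c^2) - A) - (a*d-b*c-1)*(B*a+2*C*c)"
    by algebra
  then show "C*(-c) = A*b" using assms by simp
  have "-2*(A*(a-d) + B*c) = c*((2*A*a*b + B*(a*d+b*c) + 2*C*c*d) - B)
      - 2*d*((A*a^2 + B*a*c + C*c^2) - A) - (a*d-b*c-1)*(-2*A*a-B*c)"
    by algebra
  then show "A*(a-d) = B*(-c)" using assms by simp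
qed

lemma form_act_fixed_imp_proportional:
  fixes G :: "real \<times> real \<times> real"
  assumes "g \<in> SL2Z" "form_act G g = G" "g \<notin> {(1,0,0,1), (-1,0,0,-1)}"
  shows "\<exists>m. G = form_scale m (of_int_form (fixed_form g))"
proof -
  obtain a b c d where g: "g = (a,b,c,d)" by (cases g)
  obtain A B C where G: "G = (A,B,C)" by (cases G)
  have det: "real_of_int a * of_int d - of_int b * of_int c = 1"
    using SL2Z_det_real assms(1) g by blast
  have "A*of_int a^2 + B*of_int a*of_int c + C*of_int c^2 = A"
    "2*A*of_int a*of_int b + B*(of_int a*of_int d + of_int b*of_int c) + 2*C*of_int c*of_int d = B"
    "A*of_int b^2 + B*of_int b*of_int d + C*of_int d^2 = C"
    using assms(2) g G by simp_all
  note cross = form_act_fixed_cross_eqs[OF det this]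
  have "fixed_form g \<noteq> (0,0,0)"
  proof
    assume "fixed_form g = (0,0,0)"
    then have "c = 0" "b = 0" "a = d" using g by auto
    then have "a*a = 1" using assms(1) g by (simp add: SL2Z_def)
    then have "a = 1 \<or> a = -1" using zmult_eq_1_iff by blast
    then show False using assms(3) g \<open>c = 0\<close> \<open>b = 0\<close> \<open>a = d\<close> by auto
  qed
  then have "(real_of_int (-c), real_of_int (a-d), real_of_int b) \<noteq> (0,0,0)" using g by auto
  then obtain m where "A = m*of_int (-c) \<and> B = m*of_int (a-d) \<and> C = m * of_int b"
    using proportional_of_cross_eq_zero[of B "of_int b" C "of_int (a-d)" "of_int (-c)" A] cross by auto
  then show ?thesis using g G by auto
qed

lemma hyperbolic_of_form_act_fixed:
  fixes G :: "real \<times> real \<times> real"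
  assumes "g \<in> SL2Z" "form_act G g = G" "g \<notin> {(1,0,0,1), (-1,0,0,-1)}" "form_disc G > 0"
  shows "(imat_trace g)^2 > 4"
proof -
  obtain m where "G = form_scale m (of_int_form (fixed_form g))"
    using form_act_fixed_imp_proportional[OF assms(1-3)] by blast
  then have "m^2 * of_int ((imat_trace g)^2 - 4) > 0"
    using assms(4) by (simp add: form_disc_scale form_disc_of_int form_disc_fixed_form[OF assms(1)])
  then have "real_of_int ((imat_trace g)^2 - 4) > 0"
    using zero_le_power2[of m] by (auto simp: zero_less_mult_iff)
  then have "0 < (imat_trace g)^2 - 4" by (simp only: of_int_0_less_iff)
  then show ?thesis by simp
qed

lemma form_locus_eq_fixed_form:
  fixes G :: "real \<times> real \<times> real"
  assumes "h \<in> SL2Z" "(imat_trace h)^2 > 4" "form_act G h = G" "form_disc G > 0"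
  shows "form_locus G = form_locus (of_int_form (fixed_form h))"
proof -
  have "h \<notin> {(1,0,0,1), (-1,0,0,-1)}" using assms(2) by auto
  then obtain m where m: "G = form_scale m (of_int_form (fixed_form h))"
    using form_act_fixed_imp_proportional[OF assms(1,3)] by blast
  then have "m \<noteq> 0" using assms(4) by (cases "fixed_form h") auto
  then show ?thesis using m form_locus_scale by simp
qed

lemma proportional_of_two_linear_conditions:
  fixes A B C A' B' C' s t n1 x1 :: real
  assumes "(s,t) \<noteq> (0,0)" "A*s + B*t = 0" "A'*s + B'*t = 0"
    "C = -A*n1 - B*x1" "C' = -A'*n1 - B'*x1" "(A,B,C) \<noteq> (0,0,0)"
  shows "\<exists>k. A' = k*A \<and> B' = k*B \<and> C' = k*C"
proof (cases "t = 0")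
  case True
  then have "A = 0" "A' = 0" using assms(1-3) by simp_all
  then have "B \<noteq> 0" using assms(4,6) by auto
  show ?thesis
    by (rule exI[of _ "B'/B"]) (use \<open>B \<noteq> 0\<close> \<open>A = 0\<close> \<open>A' = 0\<close> assms(4,5) in \<open>auto simp: field_simps\<close>)
next
  case False
  then have b: "B = -A*s/t" "B' = -A'*s/t" using assms(2,3) by (simp_all add: field_simps)
  then have "A \<noteq> 0" using assms(4,6) by auto
  have c: "C = A*(-n1 + s*x1/t)" "C' = A'*(-n1 + s*x1/t)" using assms(4,5) b by (simp_all add: algebra_simps)
  show ?thesis
  proof (rule exI[of _ "A'/A"], intro conjI)
    show "A' = A'/A*A" using \<open>A \<noteq> 0\<close> by simp
    show "B' = A'/A*B" using \<open>A \<noteq> 0\<close> b by (simp add: field_simps)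
    show "C' = A'/A*C" unfolding c using \<open>A \<noteq> 0\<close> by simp
  qed
qed

lemma proportional_of_two_common_zeros:
  assumes "p1 \<in> form_locus G" "p2 \<in> form_locus G" "p1 \<noteq> p2" "form_eval H p1 = 0" "form_eval H p2 = 0"
    "G \<noteq> (0,0,0)"
  shows "\<exists>k. H = form_scale k G"
proof -
  obtain A B C where G: "G = (A,B,C)" by (cases G)
  obtain A' B' C' where H: "H = (A',B',C')" by (cases H)
  let ?n1 = "(Re p1)^2 + (Im p1)^2" and ?n2 = "(Re p2)^2 + (Im p2)^2"
  have e1: "A*?n1 + B*Re p1 + C = 0" "A*?n2 + B*Re p2 + C = 0"
    using assms(1,2) G by (simp_all add: form_locus_def)
  have e2: "A'*?n1 + B'*Re p1 + C' = 0" "A'*?n2 + B'*Re p2 + C' = 0" using assms(4,5) H by simp_all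
  have st: "(?n1 - ?n2, Re p1 - Re p2) \<noteq> (0,0)"
  proof
    assume h: "(?n1 - ?n2, Re p1 - Re p2) = (0,0)"
    then have "Re p1 = Re p2" by simp
    moreover have "(Im p1)^2 = (Im p2)^2" using h \<open>Re p1 = Re p2\<close> by simp
    moreover have "Im p1 > 0" "Im p2 > 0" using assms(1,2) by (auto simp: form_locus_def uhp_def)
    ultimately have "Im p1 = Im p2" by (metis power2_eq_iff_nonneg less_imp_le)
    with \<open>Re p1 = Re p2\<close> assms(3) show False by (simp add: complex_eq_iff)
  qed
  have "\<exists>k. A' = k*A \<and> B' = k*B \<and> C' = k*C"
    by (rule proportional_of_two_linear_conditions[OF st, of A B A' B' C ?n1 "Re p1" C'])
      (use e1 e2 assms(6) G in \<open>auto simp: algebra_simps\<close>)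
  then show ?thesis using G H by auto
qed

lemma stabilizer_form_act_sign:
  assumes "L = form_locus G" "form_disc G > 0" "p1 \<in> L" "p2 \<in> L" "p1 \<noteq> p2" "g \<in> stabilizer L"
  shows "form_act G g = G \<or> form_act G g = form_scale (-1) G"
proof -
  have g: "g \<in> SL2Z" "mob g ` L = L" using assms(6) by (auto simp: stabilizer_def)
  have "form_eval (form_act G g) p = 0" if "p \<in> L" for p
  proof -
    have "Im p > 0" using that assms(1) by (simp add: form_locus_def uhp_def)
    moreover have "form_eval G (mob g p) = 0" using that g(2) assms(1) by (auto simp: form_locus_def)
    ultimately show ?thesis using form_eval_mob[OF g(1), of p G] by simp
  qed
  then obtain k where k: "form_act G g = form_scale k G"
    using proportional_of_two_common_zeros[of p1 G p2 "form_act G g"] assms(1-5) by fastforce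
  have "k^2 * form_disc G = form_disc G"
    using form_disc_act[OF g(1), of G] k form_disc_scale by metis
  then have "k = 1 \<or> k = -1" using assms(2) by (simp add: power2_eq_1_iff)
  moreover have "form_scale 1 G = G" by (cases G) simp
  ultimately show ?thesis using k by auto
qed

text \<open>Elements of the stabilizer act on the form by \<open>\<plusminus>1\<close>; among infinitely many of them
  there is either a nontrivial one acting by \<open>+1\<close>, or a product of two acting by \<open>-1\<close>.\<close>
lemma infinite_stabilizer_hyperbolic:
  assumes "complete_geodesic L" "infinite (stabilizer L)"
  obtains G h where "L = form_locus G" "form_disc G > 0" "h \<in> SL2Z" "(imat_trace h)^2 > 4"
    "form_act G h = G"
proof -
  obtain G p1 p2 where G: "L = form_locus G" "form_disc G > 0" "p1 \<in> L" "p2 \<in> L" "p1 \<noteq> p2"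
    using complete_geodesic_form_locus[OF assms(1)] by blast
  note sign = stabilizer_form_act_sign[OF G]
  have stab_SL2Z: "g \<in> SL2Z" if "g \<in> stabilizer L" for g
    using that by (simp add: stabilizer_def)
  let ?pm1 = "{(1,0,0,1), (-1,0,0,-1)} :: imat set"
  have "\<exists>h\<in>SL2Z. h \<notin> ?pm1 \<and> form_act G h = G"
  proof -
    obtain g1 where g1: "g1 \<in> stabilizer L" "g1 \<notin> ?pm1"
      using assms(2) finite_subset[of "stabilizer L" ?pm1] by blast
    obtain g2 where g2: "g2 \<in> stabilizer L" "g2 \<notin> ?pm1 \<union> {imat_adj g1, imat_uminus (imat_adj g1)}"
      using assms(2) finite_subset[of "stabilizer L" "?pm1 \<union> {imat_adj g1, imat_uminus (imat_adj g1)}"]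
      by blast
    show ?thesis
    proof (cases "form_act G g1 = G \<or> form_act G g2 = G")
      case True
      then show ?thesis using g1 g2 stab_SL2Z by blast
    next
      case False
      then have "form_act G g1 = form_scale (-1) G" "form_act G g2 = form_scale (-1) G"
        using sign g1(1) g2(1) by blast+
      then have "form_act G (imat_mult g1 g2) = form_scale (-1) (form_scale (-1) G)"
        by (simp add: form_act_imat_mult form_act_scale)
      then have "form_act G (imat_mult g1 g2) = G"
        by (cases G) simp
      moreover have "imat_mult g1 g2 \<notin> ?pm1"
      proof
        assume "imat_mult g1 g2 \<in> ?pm1"
        then have "imat_mult (imat_adj g1) (imat_mult g1 g2) \<in> imat_mult (imat_adj g1) ` ?pm1"
          by blast
        then show False
          using g2(2) imat_adj_mult_cancel_left[OF stab_SL2Z[OF g1(1)]] imat_mult_minus_id by auto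
      qed
      ultimately show ?thesis using imat_mult_SL2Z stab_SL2Z g1(1) g2(1) by blast
    qed
  qed
  then obtain h where "h \<in> SL2Z" "h \<notin> ?pm1" "form_act G h = G" by blast
  then show thesis using that G(1,2) hyperbolic_of_form_act_fixed[of h G] by blast
qed

lemma mob_image_axis:
  assumes "K = form_locus G" "form_disc G > 0" "h \<in> SL2Z" "(imat_trace h)^2 > 4"
    "form_act G h = G" "g \<in> SL2Z"
  defines "h' \<equiv> imat_mult (imat_mult g h) (imat_adj g)"
  shows "mob g ` K = form_locus (of_int_form (fixed_form h'))"
    and "form_disc (fixed_form h') = (imat_trace h)^2 - 4"
proof -
  define G' where "G' = form_act G (imat_adj g)"
  have h': "h' \<in> SL2Z" "imat_trace h' = imat_trace h"
    unfolding h'_def using imat_mult_SL2Z imat_adj_SL2Z imat_trace_conj assms(3,6) by simp_all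
  have G'g: "form_act G' g = G"
    unfolding G'_def form_act_imat_mult[symmetric] imat_adj_mult[OF assms(6)] by simp
  have "form_act G' h' = form_act (form_act (form_act G' g) h) (imat_adj g)"
    unfolding h'_def form_act_imat_mult ..
  also have "\<dots> = G'"
    unfolding G'g assms(5) G'_def[symmetric] ..
  finally have G'h': "form_act G' h' = G'" .
  have "form_disc G' > 0" unfolding G'_def using form_disc_act[OF imat_adj_SL2Z[OF assms(6)], of G] assms(2) by linarith
  then have "form_locus G' = form_locus (of_int_form (fixed_form h'))"
    using form_locus_eq_fixed_form[OF h'(1) _ G'h'] h'(2) assms(4) by simp
  then show "mob g ` K = form_locus (of_int_form (fixed_form h'))"
    using form_locus_mob_image[OF assms(6), of G'] G'g assms(1) by simp
  show "form_disc (fixed_form h') = (imat_trace h)^2 - 4"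
    using form_disc_fixed_form h' by simp
qed

text \<open>Here \<open>t\<close> is the trace of a hyperbolic element whose axis is cut out by \<open>Q\<close>.\<close>
definition hyperbolic_disc_le :: "int \<Rightarrow> int \<times> int \<times> int \<Rightarrow> bool" where
  "hyperbolic_disc_le D Q \<longleftrightarrow> (\<exists>t. form_disc Q = t^2 - 4 \<and> 4 < t^2 \<and> t^2 \<le> D)"

lemma modular_patternD:
  assumes "modular_pattern \<Gamma>"
  shows "L \<in> \<Gamma> \<Longrightarrow> complete_geodesic L"
    and "L \<in> \<Gamma> \<Longrightarrow> infinite (stabilizer L)"
    and "\<exists>F. finite F \<and> F \<subseteq> \<Gamma> \<and> (\<forall>L\<in>\<Gamma>. \<exists>g\<in>SL2Z. \<exists>K\<in>F. L = mob g ` K)"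
  using assms by (simp_all add: modular_pattern_def)

lemma modular_pattern_bounded_forms:
  assumes "modular_pattern \<Gamma>"
  obtains D where "\<forall>L\<in>\<Gamma>. \<exists>Q. L = form_locus (of_int_form Q) \<and> hyperbolic_disc_le D Q"
proof -
  obtain F where F: "finite F" "F \<subseteq> \<Gamma>" "\<forall>L\<in>\<Gamma>. \<exists>g\<in>SL2Z. \<exists>K\<in>F. L = mob g ` K"
    using modular_patternD(3)[OF assms] by blast
  define axis where "axis K G h \<longleftrightarrow> K = form_locus G \<and> form_disc G > 0 \<and> h \<in> SL2Z
      \<and> (imat_trace h)^2 > 4 \<and> form_act G h = G" for K G h
  have "\<forall>K\<in>F. \<exists>G h. axis K G h"
  proof
    fix K assume "K \<in> F"
    then have "complete_geodesic K" "infinite (stabilizer K)"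
      using F(2) modular_patternD(1,2)[OF assms] by blast+
    then obtain G h where "K = form_locus G" "form_disc G > 0" "h \<in> SL2Z" "(imat_trace h)^2 > 4"
      "form_act G h = G"
      by (rule infinite_stabilizer_hyperbolic)
    then show "\<exists>G h. axis K G h" unfolding axis_def by blast
  qed
  then obtain G where "\<forall>K\<in>F. \<exists>h. axis K (G K) h"
    using bchoice[of F "\<lambda>K G. \<exists>h. axis K G h"] by blast
  then obtain h where axis_h: "\<And>K. K \<in> F \<Longrightarrow> axis K (G K) (h K)"
    using bchoice[of F "\<lambda>K h. axis K (G K) h"] by blast
  define D where "D = Max ((\<lambda>K. (imat_trace (h K))^2) ` F)"
  have "\<exists>Q. L = form_locus (of_int_form Q) \<and> hyperbolic_disc_le D Q" if "L \<in> \<Gamma>" for L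
  proof -
    obtain g K where gK: "g \<in> SL2Z" "K \<in> F" "L = mob g ` K" using F(3) \<open>L \<in> \<Gamma>\<close> by blast
    define h' where "h' = imat_mult (imat_mult g (h K)) (imat_adj g)"
    have ax: "K = form_locus (G K)" "form_disc (G K) > 0" "h K \<in> SL2Z"
      "(imat_trace (h K))^2 > 4" "form_act (G K) (h K) = G K"
      using axis_h[OF gK(2)] unfolding axis_def by auto
    have "L = form_locus (of_int_form (fixed_form h'))"
      using mob_image_axis(1)[OF ax gK(1)] gK(3) unfolding h'_def by simp
    moreover have "form_disc (fixed_form h') = (imat_trace (h K))^2 - 4"
      using mob_image_axis(2)[OF ax gK(1)] unfolding h'_def .
    moreover have "(imat_trace (h K))^2 \<le> D" unfolding D_def using F(1) gK(2) by simp
    ultimately show ?thesis unfolding hyperbolic_disc_le_def using ax(4) by blast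
  qed
  then show thesis using that by blast
qed

section \<open>The hyperbolic distance\<close>

definition cosh_hdist :: "complex \<Rightarrow> complex \<Rightarrow> real" where
  "cosh_hdist z w = 1 + (cmod (z - w))^2 / (2 * Im z * Im w)"

lemma hdist_eq_arcosh: "hdist z w = arcosh (cosh_hdist z w)"
  by (simp add: hdist_def cosh_hdist_def)

lemma cosh_hdist_self [simp]: "cosh_hdist z z = 1"
  by (simp add: cosh_hdist_def)

lemma cosh_hdist_ge_1: "Im z > 0 \<Longrightarrow> Im w > 0 \<Longrightarrow> cosh_hdist z w \<ge> 1"
  by (simp add: cosh_hdist_def)

text \<open>The triangle inequality is proved in the hyperboloid model, where \<open>cosh_hdist\<close> becomes the
  Lorentz product and the triangle inequality follows from the Gram determinant of three points
  being a square.\<close>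

fun lorentz :: "real \<times> real \<times> real \<Rightarrow> real \<times> real \<times> real \<Rightarrow> real" where
  "lorentz (t1,x1,y1) (t2,x2,y2) = t1*t2 - x1*x2 - y1*y2"

definition hyperboloid :: "complex \<Rightarrow> real \<times> real \<times> real" where
  "hyperboloid z = (((Re z)^2 + (Im z)^2 + 1) / (2 * Im z), ((Re z)^2 + (Im z)^2 - 1) / (2 * Im z),
     Re z / Im z)"

lemma lorentz_hyperboloid: "Im z > 0 \<Longrightarrow> Im w > 0 \<Longrightarrow> lorentz (hyperboloid z) (hyperboloid w) = cosh_hdist z w"
  unfolding hyperboloid_def cosh_hdist_def cmod_power2 by (simp add: field_simps power2_eq_square)

lemma lorentz_gram_nonneg:
  "0 \<le> lorentz u u * lorentz v v * lorentz w w + 2 * lorentz u v * lorentz v w * lorentz u w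
       - (lorentz u v)^2 * lorentz w w - (lorentz v w)^2 * lorentz u u - (lorentz u w)^2 * lorentz v v"
proof -
  obtain t1 x1 y1 t2 x2 y2 t3 x3 y3 where "u = (t1,x1,y1)" "v = (t2,x2,y2)" "w = (t3,x3,y3)"
    by (cases u; cases v; cases w)
  moreover have "lorentz (t1,x1,y1) (t1,x1,y1) * lorentz (t2,x2,y2) (t2,x2,y2) * lorentz (t3,x3,y3) (t3,x3,y3)
      + 2 * lorentz (t1,x1,y1) (t2,x2,y2) * lorentz (t2,x2,y2) (t3,x3,y3) * lorentz (t1,x1,y1) (t3,x3,y3)
      - (lorentz (t1,x1,y1) (t2,x2,y2))^2 * lorentz (t3,x3,y3) (t3,x3,y3)
      - (lorentz (t2,x2,y2) (t3,x3,y3))^2 * lorentz (t1,x1,y1) (t1,x1,y1)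
      - (lorentz (t1,x1,y1) (t3,x3,y3))^2 * lorentz (t2,x2,y2) (t2,x2,y2)
    = (t1*(x2*y3 - y2*x3) - x1*(t2*y3 - y2*t3) + y1*(t2*x3 - x2*t3))^2"
    by simp algebra
  ultimately show ?thesis by simp
qed

lemma arcosh_triangle:
  fixes a b c :: real
  assumes "a \<ge> 1" "b \<ge> 1" "c \<ge> 1" "1 + 2*a*b*c - a^2 - b^2 - c^2 \<ge> 0"
  shows "arcosh c \<le> arcosh a + arcosh b"
proof -
  define s where "s = arcosh a + arcosh b"
  have "(c - a*b)^2 \<le> (a^2 - 1) * (b^2 - 1)" using assms(4) by (simp add: algebra_simps power2_eq_square)
  then have "c - a*b \<le> sqrt ((a^2 - 1) * (b^2 - 1))" by (rule real_le_rsqrt)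
  also have "a*b + sqrt ((a^2 - 1) * (b^2 - 1)) = cosh s"
    using assms(1,2) by (simp add: s_def cosh_add sinh_arcosh_real real_sqrt_mult)
  finally have "\<not> arcosh (cosh s) < arcosh c"
    using assms(3) cosh_real_ge_1[of s] by simp
  moreover have "s \<ge> 0" using assms(1,2) by (simp add: s_def)
  ultimately show ?thesis by (simp add: arcosh_cosh_real s_def)
qed

lemma hdist_triangle:
  assumes "Im z > 0" "Im u > 0" "Im w > 0"
  shows "hdist z w \<le> hdist z u + hdist u w"
proof -
  have "1 + 2 * cosh_hdist z u * cosh_hdist u w * cosh_hdist z w
      - (cosh_hdist z u)^2 - (cosh_hdist u w)^2 - (cosh_hdist z w)^2 \<ge> 0"
    using lorentz_gram_nonneg[of "hyperboloid z" "hyperboloid u" "hyperboloid w"] assms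
    by (simp add: lorentz_hyperboloid lorentz_hyperboloid[symmetric, of z z])
  then show ?thesis
    unfolding hdist_eq_arcosh using assms cosh_hdist_ge_1 by (intro arcosh_triangle) auto
qed

lemma mob_diff:
  assumes "(a,b,c,d) \<in> SL2Z" "Im z > 0" "Im w > 0"
  shows "mob (a,b,c,d) z - mob (a,b,c,d) w = (z - w) / ((of_int c * z + of_int d) * (of_int c * w + of_int d))"
proof -
  have "of_int c * z + of_int d \<noteq> 0" "of_int c * w + of_int d \<noteq> 0"
    using mob_denom_nonzero assms by blast+
  moreover have "complex_of_int a * of_int d - of_int b * of_int c = 1"
    using assms(1) by (simp add: SL2Z_def) (metis of_int_1 of_int_diff of_int_mult)
  ultimately show ?thesis by (simp add: divide_simps) algebra
qed

lemma cosh_hdist_mob: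
  assumes "M \<in> SL2Z" "Im z > 0" "Im w > 0"
  shows "cosh_hdist (mob M z) (mob M w) = cosh_hdist z w"
proof -
  obtain a b c d where M: "M = (a,b,c,d)" by (cases M)
  let ?p = "cmod (of_int c * z + of_int d)" and ?q = "cmod (of_int c * w + of_int d)"
  have "?p \<noteq> 0" "?q \<noteq> 0" using mob_denom_nonzero assms M by auto
  moreover have Im_z: "Im (mob M z) = Im z / ?p^2" and Im_w: "Im (mob M w) = Im w / ?q^2"
    using Im_mob assms M by (simp_all add: mob_den_eq_cmod)
  moreover have dist: "cmod (mob M z - mob M w) = cmod (z - w) / (?p * ?q)"
    using mob_diff[of a b c d z w] assms M by (simp add: norm_divide norm_mult)
  ultimately show ?thesis
    unfolding cosh_hdist_def Im_z Im_w dist by (simp add: field_simps power2_eq_square)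
qed

lemma hdist_mob: "M \<in> SL2Z \<Longrightarrow> Im z > 0 \<Longrightarrow> Im w > 0 \<Longrightarrow> hdist (mob M z) (mob M w) = hdist z w"
  by (simp add: hdist_eq_arcosh cosh_hdist_mob)

lemma hseg_mob:
  assumes "M \<in> SL2Z" "z \<in> uhp" "w \<in> uhp" "u \<in> hseg z w"
  shows "mob M u \<in> hseg (mob M z) (mob M w)"
  using assms mob_uhp[OF assms(1)] hdist_mob[OF assms(1)] by (auto simp: hseg_def uhp_def)

text \<open>If both endpoints were strictly on one side of the imaginary axis, reflecting one of them
  across the axis would keep its distance to the crossing point but increase its distance to the
  other endpoint, contradicting the triangle inequality.\<close>
lemma hseg_crosses_imaginary_axis:
  assumes "z \<in> uhp" "w \<in> uhp" "u \<in> hseg z w" "Re u = 0"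
  shows "Re z * Re w \<le> 0"
proof (rule ccontr)
  assume "\<not> ?thesis"
  then have same_side: "Re z * Re w > 0" by simp
  have u: "Im u > 0" "hdist z u + hdist u w = hdist z w" using assms(3) by (auto simp: hseg_def uhp_def)
  have i: "Im z > 0" "Im w > 0" using assms(1,2) by (auto simp: uhp_def)
  define z' where "z' = - cnj z"
  have "Im z' > 0" using i by (simp add: z'_def)
  have "hdist z' u = hdist z u"
    unfolding hdist_eq_arcosh cosh_hdist_def z'_def cmod_power2 using assms(4) by (simp add: power2_eq_square)
  moreover have "hdist z' w \<le> hdist z' u + hdist u w" using hdist_triangle \<open>Im z' > 0\<close> u(1) i(2) .
  moreover have "(cmod (z - w))^2 < (cmod (z' - w))^2"
    unfolding z'_def cmod_power2 using same_side by (simp add: power2_eq_square algebra_simps)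
  then have "cosh_hdist z w < cosh_hdist z' w"
    unfolding cosh_hdist_def using i by (simp add: z'_def divide_strict_right_mono)
  then have "hdist z w < hdist z' w" unfolding hdist_eq_arcosh using cosh_hdist_ge_1[OF i] by simp
  ultimately show False using u(2) by simp
qed

section \<open>The modular tiling\<close>

definition refl_mid :: "complex \<Rightarrow> complex" where
  "refl_mid z = 1 - cnj z"

lemma refl_mid_simps [simp]:
  "Im (refl_mid z) = Im z" "Re (refl_mid z) = 1 - Re z" "refl_mid (refl_mid z) = z"
  by (simp_all add: refl_mid_def)

lemma cmod_refl_mid_sub_half: "cmod (refl_mid z - 1/2) = cmod (z - 1/2)"
proof -
  have "refl_mid z - 1/2 = - cnj (z - 1/2)" by (simp add: refl_mid_def complex_eq_iff)
  then show ?thesis by (simp only: norm_minus_cancel complex_mod_cnj)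
qed

fun conj_refl_mid :: "imat \<Rightarrow> imat" where
  "conj_refl_mid (a,b,c,d) = (a-c, c+d-a-b, -c, c+d)"

lemma conj_refl_mid_SL2Z: "R \<in> SL2Z \<Longrightarrow> conj_refl_mid R \<in> SL2Z"
  by (cases R) (simp add: SL2Z_def algebra_simps)

lemma refl_mid_mob_refl_mid:
  assumes "R \<in> SL2Z" "Im z > 0"
  shows "refl_mid (mob R (refl_mid z)) = mob (conj_refl_mid R) z"
proof -
  obtain a b c d where R: "R = (a,b,c,d)" by (cases R)
  have "of_int (-c) * z + of_int (c+d) \<noteq> 0"
    using mob_denom_nonzero[of "a-c" "c+d-a-b" "-c" "c+d" z] conj_refl_mid_SL2Z[OF assms(1)] R assms(2)
    by simp
  then have "of_int c * (1 - z) + of_int d \<noteq> 0" "of_int (-c) * z + of_int (c+d) \<noteq> 0"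
    by (simp_all add: algebra_simps)
  then show ?thesis by (simp add: R refl_mid_def divide_simps) (simp add: algebra_simps)
qed

lemma T0_reflection_mob:
  assumes "r \<in> T0_reflections"
  obtains R where "R \<in> SL2Z" "\<And>z. Im z > 0 \<Longrightarrow> r z = mob R (refl_mid z)"
proof -
  have "reflV 0 z = mob (1,-1,0,1) (refl_mid z)" for z by (simp add: reflV_def refl_mid_def)
  moreover have "reflV 1 z = mob (1,1,0,1) (refl_mid z)" for z by (simp add: reflV_def refl_mid_def)
  moreover have "reflC (1/2) (1/2) z = mob (-1,1,-2,1) (refl_mid z)" if "Im z > 0" for z
  proof -
    have "cnj z - 1/2 \<noteq> 0" using that by (auto simp: complex_eq_iff)
    moreover have "-2 * (1 - cnj z) + 1 \<noteq> 0" using that by (auto simp: complex_eq_iff)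
    ultimately show ?thesis by (simp add: reflC_def refl_mid_def divide_simps power2_eq_square)
  qed
  moreover have "(1,-1,0,1) \<in> SL2Z" "(1,1,0,1) \<in> SL2Z" "(-1,1,-2,1) \<in> SL2Z" by (simp_all add: SL2Z_def)
  ultimately show thesis using assms that unfolding T0_reflections_def by blast
qed

lemma refl_group_mob:
  assumes "f \<in> refl_group"
  obtains M b where "M \<in> SL2Z" "\<And>z. Im z > 0 \<Longrightarrow> f z = mob M (if b then z else refl_mid z)"
  using assms
proof (induction arbitrary: thesis rule: refl_group.induct)
  case id_in
  show ?case by (rule id_in[of "(1,0,0,1)" True]) (simp_all add: SL2Z_def)
next
  case (step f r)
  obtain M b where M: "M \<in> SL2Z" "\<And>z. Im z > 0 \<Longrightarrow> f z = mob M (if b then z else refl_mid z)"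
    using step.IH by blast
  obtain R where R: "R \<in> SL2Z" "\<And>z. Im z > 0 \<Longrightarrow> r z = mob R (refl_mid z)"
    using T0_reflection_mob[OF step.hyps(2)] by blast
  have "Im (r z) > 0" if "Im z > 0" for z using R Im_mob_pos[OF R(1), of "refl_mid z"] that by simp
  then have "(f \<circ> r) z = mob M (if b then mob R (refl_mid z) else refl_mid (mob R (refl_mid z)))"
    if "Im z > 0" for z
    using M(2) R(2) that by simp
  show ?case
  proof (cases b)
    case True
    with \<open>\<And>z. Im z > 0 \<Longrightarrow> (f \<circ> r) z = _\<close> show ?thesis
      using imat_mult_SL2Z[OF M(1) R(1)] mob_imat_mult[OF M(1) R(1)]
      by (intro step.prems[of "imat_mult M R" False]) simp_all
  next
    case False
    with \<open>\<And>z. Im z > 0 \<Longrightarrow> (f \<circ> r) z = _\<close> show ?thesis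
      using imat_mult_SL2Z[OF M(1) conj_refl_mid_SL2Z[OF R(1)]]
        mob_imat_mult[OF M(1) conj_refl_mid_SL2Z[OF R(1)]] refl_mid_mob_refl_mid[OF R(1)]
      by (intro step.prems[of "imat_mult M (conj_refl_mid R)" True]) simp_all
  qed
qed

lemma T0_uhp: "T0 \<subseteq> uhp"
  by (auto simp: T0_def)

lemma refl_mid_T0: "z \<in> T0 \<Longrightarrow> refl_mid z \<in> T0"
  using cmod_refl_mid_sub_half[of z] by (simp add: T0_def uhp_def)

lemma Im_T0_center: "Im T0_center > 0"
  by (simp add: T0_center_def)

lemma refl_mid_T0_center: "refl_mid T0_center = T0_center"
  by (simp add: refl_mid_def T0_center_def complex_eq_iff)

lemma tile_mob:
  assumes "f \<in> refl_group"
  obtains M where "M \<in> SL2Z" "f T0_center = mob M T0_center" "f ` T0 \<subseteq> mob M ` T0"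
proof -
  obtain M b where M: "M \<in> SL2Z" "\<And>z. Im z > 0 \<Longrightarrow> f z = mob M (if b then z else refl_mid z)"
    using refl_group_mob[OF assms] by blast
  have "f z \<in> mob M ` T0" if "z \<in> T0" for z
  proof -
    have "Im z > 0" using that T0_uhp by (auto simp: uhp_def)
    then have "f z = mob M (if b then z else refl_mid z)" using M(2) by simp
    moreover have "(if b then z else refl_mid z) \<in> T0" using that refl_mid_T0 by simp
    ultimately show ?thesis by blast
  qed
  moreover have "f T0_center = mob M T0_center"
    using M(2)[OF Im_T0_center] refl_mid_T0_center by simp
  ultimately show thesis using that M(1) by blast
qed

lemma refl_mid_image_swap:
  assumes "\<And>z. z \<in> A \<Longrightarrow> refl_mid z \<in> B" "\<And>z. z \<in> B \<Longrightarrow> refl_mid z \<in> A"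
  shows "refl_mid ` A = B"
  using assms by (auto intro: image_eqI[where x = "refl_mid z" for z])

lemma refl_mid_image_T0_sides: "S \<in> T0_sides \<Longrightarrow> refl_mid ` S \<in> T0_sides"
proof -
  have "refl_mid ` vline 0 = vline 1" "refl_mid ` vline 1 = vline 0"
    by (rule refl_mid_image_swap; auto simp: vline_def uhp_def)+
  moreover have "refl_mid ` hcirc (1/2) (1/2) = hcirc (1/2) (1/2)"
    using cmod_refl_mid_sub_half by (intro refl_mid_image_swap) (simp_all add: hcirc_def uhp_def)
  ultimately show "S \<in> T0_sides \<Longrightarrow> refl_mid ` S \<in> T0_sides" by (auto simp: T0_sides_def)
qed

lemma T0_side_mob:
  assumes "S \<in> T0_sides"
  obtains N where "N \<in> SL2Z" "S = mob N ` vline 0"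
proof -
  have "vline 1 = mob (1,1,0,1) ` vline 0"
    using form_locus_mob_image[of "(1,1,0,1)" "(0,1,-1)"] vline_eq_form_locus by (simp add: SL2Z_def)
  moreover have "hcirc (1/2) (1/2) = mob (1,0,1,1) ` vline 0"
  proof -
    have "form_locus (form_act (1,-1,0) (1,0,1,1)) = vline 0"
      using form_locus_scale[of "-1" "(0,1,0)"] vline_eq_form_locus[of 0] by simp
    moreover have "hcirc (1/2) (1/2) = form_locus (1,-1,0)"
      using hcirc_eq_form_locus[of "1/2" "1/2"] by (simp add: power2_eq_square)
    ultimately show ?thesis
      using form_locus_mob_image[of "(1,0,1,1)" "(1,-1,0)"] by (simp add: SL2Z_def)
  qed
  moreover have "vline 0 = mob (1,0,0,1) ` vline 0" by simp
  moreover have "(1,0,0,1) \<in> SL2Z" "(1,1,0,1) \<in> SL2Z" "(1,0,1,1) \<in> SL2Z" by (simp_all add: SL2Z_def)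
  ultimately show thesis using assms that unfolding T0_sides_def by blast
qed

lemma tiling_edge_mob:
  assumes "E \<in> tiling_edges"
  obtains M where "M \<in> SL2Z" "E = mob M ` vline 0"
proof -
  obtain f S where fS: "E = f ` S" "f \<in> refl_group" "S \<in> T0_sides"
    using assms unfolding tiling_edges_def by blast
  obtain M b where M: "M \<in> SL2Z" "\<And>z. Im z > 0 \<Longrightarrow> f z = mob M (if b then z else refl_mid z)"
    using refl_group_mob[OF fS(2)] by blast
  define S' where "S' = (if b then S else refl_mid ` S)"
  have "S \<subseteq> uhp" using fS(3) by (auto simp: T0_sides_def vline_def hcirc_def)
  then have "f ` S = (\<lambda>z. mob M (if b then z else refl_mid z)) ` S"
    using M(2) by (intro image_cong) (auto simp: uhp_def)
  then have "f ` S = mob M ` S'"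
    unfolding S'_def by (cases b) (simp_all add: image_image)
  moreover have "S' \<in> T0_sides" using fS(3) refl_mid_image_T0_sides by (simp add: S'_def)
  then obtain N where N: "N \<in> SL2Z" "S' = mob N ` vline 0" by (rule T0_side_mob)
  moreover have "vline 0 \<subseteq> uhp" by (auto simp: vline_def)
  ultimately have "E = mob (imat_mult M N) ` vline 0" using fS(1) image_mob_imat_mult[OF M(1) N(1)] by simp
  then show thesis using imat_mult_SL2Z[OF M(1) N(1)] that by blast
qed

lemma SL2Z_products_nonneg:
  fixes a b c d :: int
  assumes "a*d - b*c = 1"
  shows "(a*c)*(b*d) \<ge> 0" "(a*c)*((a+b)*(c+d)) \<ge> 0" "(b*d)*((a+b)*(c+d)) \<ge> 0"
proof -
  \<comment> \<open>each product has the form \<open>k (k + 1)\<close>\<close>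
  have k_succ: "k * (k+1) \<ge> 0" for k :: int
    by (cases "k \<ge> 0") (auto simp: mult_nonneg_nonneg mult_nonpos_nonpos)
  have "(a*c)*(b*d) = (b*c)*(a*d)" by (simp add: ac_simps)
  also have "\<dots> = (b*c)*(b*c + 1)" using assms by (simp add: algebra_simps)
  finally show "(a*c)*(b*d) \<ge> 0" using k_succ[of "b*c"] by linarith
  have "(a*c)*((a+b)*(c+d)) = (c*(a+b))*(a*(c+d))" by (simp add: ac_simps)
  also have "\<dots> = (c*(a+b))*(c*(a+b) + 1)" using assms by (simp add: algebra_simps)
  finally show "(a*c)*((a+b)*(c+d)) \<ge> 0" using k_succ[of "c*(a+b)"] by linarith
  have "(b*d)*((a+b)*(c+d)) = (b*(c+d))*((a+b)*d)" by (simp add: ac_simps)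
  also have "\<dots> = (b*(c+d))*(b*(c+d) + 1)" using assms by (simp add: algebra_simps)
  finally show "(b*d)*((a+b)*(c+d)) \<ge> 0" using k_succ[of "b*(c+d)"] by linarith
qed

lemma SL2Z_products_sum_nonzero:
  fixes a b c d :: int
  assumes "a*d - b*c = 1"
  shows "a*c + b*d + (a+b)*(c+d) \<noteq> 0"
proof
  define p q r where "p = a*c" and "q = b*d" and "r = (a+b)*(c+d)"
  assume "a*c + b*d + (a+b)*(c+d) = 0"
  then have sum: "p + q + r = 0" by (simp add: p_def q_def r_def)
  have zero: "x = 0" if "x*y \<ge> 0" "x*z \<ge> 0" "x + y + z = 0" for x y z :: int
  proof -
    have "x*x + x*y + x*z = x*(x + y + z)" by (simp add: algebra_simps)
    then have "x*x \<le> 0" using that by simp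
    then show "x = 0" using zero_le_square[of x] by simp
  qed
  have "p*q \<ge> 0" "p*r \<ge> 0" "q*r \<ge> 0"
    using SL2Z_products_nonneg[OF assms] by (simp_all add: p_def q_def r_def)
  then have "p = 0" "q = 0" using zero[of p q r] zero[of q p r] sum by (simp_all add: mult.commute add_ac)
  then have "p = 0" "q = 0" "r = 0" using sum by simp_all
  then show False using assms unfolding p_def q_def r_def
    by (cases "a = 0") (auto simp: algebra_simps)
qed

lemma Re_mob_mult_den:
  assumes "(a,b,c,d) \<in> SL2Z" "Im z > 0"
  shows "Re (mob (a,b,c,d) z) * mob_den (a,b,c,d) z
    = of_int (a*c) * ((Re z)^2 + (Im z)^2 - Re z) + of_int (b*d) * (1 - Re z) + of_int ((a+b)*(c+d)) * Re z"
proof -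
  have den: "mob_den (a,b,c,d) z \<noteq> 0" using mob_den_pos[OF assms] by simp
  then have "Re (mob (a,b,c,d) z) * mob_den (a,b,c,d) z = of_int a * of_int c * ((Re z)^2 + (Im z)^2)
      + (of_int a * of_int d + of_int b * of_int c) * Re z + of_int b * of_int d"
    using Re_mob[OF den] by (simp del: mob.simps)
  then show ?thesis by (simp add: algebra_simps)
qed

lemma pairwise_nonneg_products_mult_sum:
  fixes p q r s1 s2 s3 :: real
  assumes "p*q \<ge> 0" "p*r \<ge> 0" "q*r \<ge> 0" "s1 \<ge> 0" "s2 \<ge> 0" "s3 \<ge> 0"
  shows "(p*s3 + q*s2 + r*s1) * (p+q+r) \<ge> 0"
proof -
  have "(p*s3 + q*s2 + r*s1) * (p+q+r)
      = (p*p)*s3 + (q*q)*s2 + (r*r)*s1 + (p*q)*(s3+s2) + (p*r)*(s3+s1) + (q*r)*(s2+s1)"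
    by (simp add: algebra_simps)
  also have "\<dots> \<ge> 0" using assms by (simp add: add_nonneg_nonneg)
  finally show ?thesis .
qed

lemma T0_coordinates_nonneg:
  assumes "t \<in> T0"
  shows "Re t \<ge> 0" "1 - Re t \<ge> 0" "(Re t)^2 + (Im t)^2 - Re t \<ge> 0"
proof -
  show "Re t \<ge> 0" "1 - Re t \<ge> 0" using assms by (auto simp: T0_def)
  have "(1/2)^2 \<le> (cmod (t - 1/2))^2" using assms by (simp add: T0_def power_mono)
  then have "1/4 \<le> (Re t - 1/2)^2 + (Im t)^2" by (simp add: cmod_power2 power_divide)
  then show "(Re t)^2 + (Im t)^2 - Re t \<ge> 0" by (simp add: power2_eq_square algebra_simps)
qed

text \<open>\<open>Re (M t) \<bar>c t + d\<bar>\<^sup>2\<close> is a combination of \<open>Re t\<close>, \<open>1 - Re t\<close>, \<open>\<bar>t\<bar>\<^sup>2 - Re t\<close>, which are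
  nonnegative on \<open>T0\<close>, with coefficients \<open>a c\<close>, \<open>b d\<close>, \<open>(a + b)(c + d)\<close> whose pairwise
  products are nonnegative.\<close>
lemma mob_T0_side_of_imaginary_axis:
  assumes "M \<in> SL2Z" "t \<in> T0"
  shows "Re (mob M t) * Re (mob M T0_center) \<ge> 0" and "Re (mob M T0_center) \<noteq> 0"
proof -
  obtain a b c d where M: "M = (a,b,c,d)" by (cases M)
  have det: "a*d - b*c = 1" using assms(1) M by (simp add: SL2Z_def)
  define p q r where "p = real_of_int (a*c)" and "q = real_of_int (b*d)" and "r = real_of_int ((a+b)*(c+d))"
  have "Im t > 0" using assms(2) T0_uhp by (auto simp: uhp_def)
  have den_pos: "mob_den M t > 0" "mob_den M T0_center > 0"
    using mob_den_pos assms(1) \<open>Im t > 0\<close> Im_T0_center by blast+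
  have c: "(Re T0_center)^2 + (Im T0_center)^2 - Re T0_center = 1/2" "1 - Re T0_center = 1/2"
    "Re T0_center = 1/2"
    by (simp_all add: T0_center_def power2_eq_square)
  have center: "Re (mob M T0_center) * mob_den M T0_center = (p + q + r) / 2"
    using Re_mob_mult_den[OF assms(1)[unfolded M] Im_T0_center, unfolded c(1,2), unfolded c(3)]
    unfolding M p_def q_def r_def by simp
  have "p + q + r \<noteq> 0"
    using SL2Z_products_sum_nonzero[OF det] unfolding p_def q_def r_def by (metis of_int_add of_int_eq_0_iff)
  then show "Re (mob M T0_center) \<noteq> 0" using center by auto
  have "p*q \<ge> 0" "p*r \<ge> 0" "q*r \<ge> 0"
    using SL2Z_products_nonneg[OF det] unfolding p_def q_def r_def by (metis of_int_0_le_iff of_int_mult)+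
  note combination = pairwise_nonneg_products_mult_sum[OF this T0_coordinates_nonneg[OF assms(2)]]
  have "Re (mob M t) * mob_den M t = p * ((Re t)^2 + (Im t)^2 - Re t) + q * (1 - Re t) + r * Re t"
    using Re_mob_mult_den[OF assms(1)[unfolded M] \<open>Im t > 0\<close>] unfolding M p_def q_def r_def .
  then have "(Re (mob M t) * mob_den M t) * (Re (mob M T0_center) * mob_den M T0_center) \<ge> 0"
    using combination unfolding center by simp
  then have "(Re (mob M t) * Re (mob M T0_center)) * (mob_den M t * mob_den M T0_center) \<ge> 0"
    by (simp add: algebra_simps)
  moreover have "mob_den M t * mob_den M T0_center > 0" using den_pos by simp
  ultimately show "Re (mob M t) * Re (mob M T0_center) \<ge> 0"
    using mult_neg_pos[of "Re (mob M t) * Re (mob M T0_center)"] by (meson not_le)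
qed

lemma mult_nonpos_of_opposite_references:
  fixes x1 x2 c1 c2 :: real
  assumes "x1 * c1 \<ge> 0" "x2 * c2 \<ge> 0" "c1 * c2 \<le> 0" "c1 \<noteq> 0" "c2 \<noteq> 0"
  shows "x1 * x2 \<le> 0"
proof -
  have "(x1 * x2) * (c1 * c2) \<ge> 0"
    using mult_nonneg_nonneg[OF assms(1,2)] by (simp add: algebra_simps)
  moreover have "c1 * c2 < 0" using assms(3-5) by (simp add: order_le_less)
  ultimately show ?thesis using mult_pos_neg[of "x1 * x2" "c1 * c2"] by linarith
qed

lemma tiles_opposite_sides_of_imaginary_axis:
  assumes "P1 \<in> SL2Z" "P2 \<in> SL2Z" "v \<in> vline 0" "v \<in> hseg (mob P1 T0_center) (mob P2 T0_center)"
    "t1 \<in> T0" "t2 \<in> T0"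
  shows "Re (mob P1 t1) * Re (mob P2 t2) \<le> 0"
proof (rule mult_nonpos_of_opposite_references)
  show "Re (mob P1 t1) * Re (mob P1 T0_center) \<ge> 0" "Re (mob P2 t2) * Re (mob P2 T0_center) \<ge> 0"
    "Re (mob P1 T0_center) \<noteq> 0" "Re (mob P2 T0_center) \<noteq> 0"
    using mob_T0_side_of_imaginary_axis assms(1,2,5,6) by blast+
  show "Re (mob P1 T0_center) * Re (mob P2 T0_center) \<le> 0"
    using hseg_crosses_imaginary_axis mob_uhp assms(1-4) Im_T0_center by (simp add: vline_def uhp_def)
qed

section \<open>Geodesics crossing a fixed edge\<close>

lemma form_locus_opposite_sides_ordered:
  fixes A B C :: real
  assumes "A > 0" "form_eval (A,B,C) z1 = 0" "form_eval (A,B,C) z2 = 0" "Re z1 \<le> 0" "Re z2 \<ge> 0"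
  shows "C \<le> 0"
proof -
  define x1 x2 y1 y2 where "x1 = Re z1" and "x2 = Re z2" and "y1 = Im z1" and "y2 = Im z2"
  have e1: "A*x1^2 + B*x1 + C = -A*y1^2" and e2: "A*x2^2 + B*x2 + C = -A*y2^2"
    using assms(2,3) unfolding x1_def x2_def y1_def y2_def by (simp_all add: algebra_simps)
  have x: "x1 \<le> 0" "x2 \<ge> 0" using assms(4,5) unfolding x1_def x2_def by auto
  \<comment> \<open>convexity of \<open>A x\<^sup>2 + B x + C\<close>, which is \<open>\<le> 0\<close> at \<open>x1 \<le> 0 \<le> x2\<close>\<close>
  have "(x2 - x1) * C = x2 * (A*x1^2 + B*x1 + C) - x1 * (A*x2^2 + B*x2 + C) - A*x1*x2*(x1 - x2)"
    by algebra
  also have "\<dots> = - (x2 * (A*y1^2)) + x1 * (A*y2^2) - A*((x1*x2)*(x1 - x2))"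
    unfolding e1 e2 by (simp add: algebra_simps)
  also have "\<dots> \<le> 0"
  proof -
    have "x2 * (A*y1^2) \<ge> 0" "x1 * (A*y2^2) \<le> 0" using x assms(1) by (simp_all add: mult_nonpos_nonneg)
    moreover have "(x1*x2)*(x1 - x2) \<ge> 0" using x by (simp add: mult_nonpos_nonneg mult_nonpos_nonpos)
    then have "A*((x1*x2)*(x1 - x2)) \<ge> 0" using assms(1) by simp
    ultimately show ?thesis by linarith
  qed
  finally have le: "(x2 - x1) * C \<le> 0" .
  show ?thesis
  proof (cases "x1 = x2")
    case True
    then have "x1 = 0" using x by simp
    then show ?thesis using e1 assms(1) by (simp add: add_nonpos_nonpos)
  next
    case False
    then show ?thesis using le x by (simp add: mult_le_0_iff)
  qed
qed

lemma form_locus_opposite_sides: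
  fixes A B C :: real
  assumes "form_eval (A,B,C) z1 = 0" "form_eval (A,B,C) z2 = 0" "Re z1 * Re z2 \<le> 0"
  shows "A * C \<le> 0"
proof -
  have pos: "C' \<le> 0" if "A' > 0" "form_eval (A',B',C') z1 = 0" "form_eval (A',B',C') z2 = 0" for A' B' C'
    using assms(3) form_locus_opposite_sides_ordered[OF that] form_locus_opposite_sides_ordered[OF that(1,3,2)]
    unfolding mult_le_0_iff by blast
  consider "A > 0" | "A = 0" | "A < 0" by linarith
  then show ?thesis
  proof cases
    case 1
    then show ?thesis using pos[OF 1 assms(1,2)] by (simp add: mult_le_0_iff)
  next
    case 3
    have "form_eval (-A,-B,-C) z1 = 0" "form_eval (-A,-B,-C) z2 = 0"
      using assms(1,2) by (simp_all add: algebra_simps)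
    then show ?thesis using pos[of "-A" "-B" "-C"] 3 by (simp add: mult_le_0_iff)
  qed simp
qed

lemma square_ne_sub_4:
  fixes s t :: int
  assumes "t^2 > 4"
  shows "s^2 \<noteq> t^2 - 4"
proof
  assume h: "s^2 = t^2 - 4"
  then have "\<bar>s\<bar>^2 < \<bar>t\<bar>^2" by simp
  then have "\<bar>s\<bar> < \<bar>t\<bar>" by (rule power_less_imp_less_base) simp
  then have "\<bar>s\<bar>^2 \<le> (\<bar>t\<bar> - 1)^2" by (intro power_mono) simp_all
  also have "\<dots> = t^2 - 2*\<bar>t\<bar> + 1" by (simp add: power2_diff)
  finally have "\<bar>t\<bar> \<le> 2" using h by simp
  then have "\<bar>t\<bar>^2 \<le> 2^2" by (intro power_mono) simp_all
  then show False using assms by simp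
qed

definition int_cube :: "int \<Rightarrow> (int \<times> int \<times> int) set" where
  "int_cube D = {-D..D} \<times> {-D..D} \<times> {-D..D}"

lemma hyperbolic_disc_le_act:
  "hyperbolic_disc_le D Q \<Longrightarrow> M \<in> SL2Z \<Longrightarrow> hyperbolic_disc_le D (form_act Q M)"
  by (simp add: hyperbolic_disc_le_def form_disc_act)

text \<open>Since the discriminant is not a square, \<open>A\<close> and \<open>C\<close> are nonzero integers; with \<open>A C \<le> 0\<close>
  all of \<open>\<bar>A\<bar>, \<bar>B\<bar>, \<bar>C\<bar>\<close> are bounded by \<open>B\<^sup>2 - 4 A C \<le> D\<close>.\<close>
lemma hyperbolic_disc_le_in_int_cube:
  assumes "hyperbolic_disc_le D (A,B,C)" "A * C \<le> 0"
  shows "(A,B,C) \<in> int_cube D"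
proof -
  obtain t where t: "B^2 - 4*A*C = t^2 - 4" "4 < t^2" "t^2 \<le> D"
    using assms(1) unfolding hyperbolic_disc_le_def by auto
  have "A \<noteq> 0" "C \<noteq> 0" using square_ne_sub_4[OF t(2), of B] t(1) by auto
  then have "\<bar>A\<bar> \<le> \<bar>A*C\<bar>" "\<bar>C\<bar> \<le> \<bar>A*C\<bar>" by (simp_all add: abs_mult)
  moreover have "4*(A*C) = B^2 + 4 - t^2" using t(1) by (simp add: algebra_simps)
  then have "4 * (-(A*C)) \<le> D - 4" "B^2 \<le> D" using t(1,3) assms(2) zero_le_power2[of B] by linarith+
  then have "\<bar>A*C\<bar> \<le> D" "B^2 \<le> D" using assms(2) t(2,3) by simp_all
  moreover have "\<bar>B\<bar> \<le> B^2"
  proof (cases "B = 0")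
    case False
    then have "\<bar>B\<bar> * 1 \<le> \<bar>B\<bar> * \<bar>B\<bar>" by (intro mult_left_mono) auto
    then show ?thesis by (simp add: power2_eq_square abs_mult_self_eq)
  qed simp
  ultimately show ?thesis unfolding int_cube_def by auto
qed

lemma crossed_edge_form_in_int_cube:
  assumes Q: "hyperbolic_disc_le D Q"
    and M: "M1 \<in> SL2Z" "M2 \<in> SL2Z" "M \<in> SL2Z"
    and meets: "form_locus (of_int_form Q) \<inter> mob M1 ` T0 \<noteq> {}" "form_locus (of_int_form Q) \<inter> mob M2 ` T0 \<noteq> {}"
    and crossed: "mob M ` vline 0 \<inter> hseg (mob M1 T0_center) (mob M2 T0_center) \<noteq> {}"
  shows "form_act Q M \<in> int_cube D"
proof -
  \<comment> \<open>move the crossed edge to the imaginary axis by \<open>N = M\<inverse>\<close>\<close>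
  define N where "N = imat_adj M"
  have N: "N \<in> SL2Z" unfolding N_def using imat_adj_SL2Z[OF M(3)] .
  define P1 P2 where "P1 = imat_mult N M1" and "P2 = imat_mult N M2"
  have P: "P1 \<in> SL2Z" "P2 \<in> SL2Z" unfolding P1_def P2_def using imat_mult_SL2Z N M by blast+
  obtain A B C where ABC: "form_act Q M = (A,B,C)" by (cases "form_act Q M")
  have "form_act (of_int_form (A,B,C)) N = of_int_form Q"
    unfolding ABC[symmetric] form_act_of_int form_act_imat_mult[symmetric] N_def imat_mult_adj[OF M(3)]
    by simp
  then have locus: "mob N ` form_locus (of_int_form Q) = form_locus (of_int_form (A,B,C))"
    using form_locus_mob_image[OF N, of "of_int_form (A,B,C)"] by simp
  have "mob N ` mob M1 ` T0 = mob P1 ` T0" "mob N ` mob M2 ` T0 = mob P2 ` T0"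
    unfolding P1_def P2_def using image_mob_imat_mult[OF N _ T0_uhp] M(1,2) by simp_all
  then have "form_locus (of_int_form (A,B,C)) \<inter> mob P1 ` T0 \<noteq> {}"
    "form_locus (of_int_form (A,B,C)) \<inter> mob P2 ` T0 \<noteq> {}"
    using meets unfolding locus[symmetric] by blast+
  then obtain t1 t2 where t: "t1 \<in> T0" "t2 \<in> T0"
    "mob P1 t1 \<in> form_locus (of_int_form (A,B,C))" "mob P2 t2 \<in> form_locus (of_int_form (A,B,C))"
    by blast
  obtain v where v: "v \<in> vline 0" "mob M v \<in> hseg (mob M1 T0_center) (mob M2 T0_center)"
    using crossed by blast
  have "Im v > 0" using v(1) by (simp add: vline_def uhp_def)
  then have "mob N (mob M v) = v" unfolding N_def using mob_adj_left[OF M(3)] by simp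
  moreover have "mob N (mob M v) \<in> hseg (mob N (mob M1 T0_center)) (mob N (mob M2 T0_center))"
    using hseg_mob[OF N _ _ v(2)] mob_uhp M(1,2) Im_T0_center by (simp add: uhp_def)
  moreover have "mob N (mob Mi T0_center) = mob (imat_mult N Mi) T0_center" if "Mi \<in> SL2Z" for Mi
    using mob_imat_mult[OF N that Im_T0_center] .
  ultimately have "v \<in> hseg (mob P1 T0_center) (mob P2 T0_center)"
    unfolding P1_def P2_def using M(1,2) by simp
  then have "Re (mob P1 t1) * Re (mob P2 t2) \<le> 0"
    using tiles_opposite_sides_of_imaginary_axis[OF P v(1) _ t(1,2)] by blast
  then have "real_of_int A * of_int C \<le> 0"
    using form_locus_opposite_sides[of "of_int A" "of_int B" "of_int C" "mob P1 t1" "mob P2 t2"] t(3,4)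
    by (simp add: form_locus_def)
  then have "A * C \<le> 0" by (simp flip: of_int_mult)
  then show ?thesis
    using hyperbolic_disc_le_in_int_cube hyperbolic_disc_le_act[OF Q M(3)] ABC by simp
qed

lemma hyperbolic_disc_le_nonzero: "hyperbolic_disc_le D Q \<Longrightarrow> of_int_form Q \<noteq> (0,0,0)"
  by (cases Q) (auto simp: hyperbolic_disc_le_def)

lemma SL2Z_fixing_two_geodesics:
  fixes G1 G2 :: "real \<times> real \<times> real"
  assumes "g \<in> SL2Z" "form_act G1 g = G1" "form_act G2 g = G2" "G1 \<noteq> (0,0,0)" "G2 \<noteq> (0,0,0)"
    "form_locus G1 \<noteq> form_locus G2"
  shows "g \<in> {(1,0,0,1), (-1,0,0,-1)}"
proof (rule ccontr)
  let ?F = "of_int_form (fixed_form g)"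
  assume "g \<notin> {(1,0,0,1), (-1,0,0,-1)}"
  then obtain m1 m2 where m: "G1 = form_scale m1 ?F" "G2 = form_scale m2 ?F"
    using form_act_fixed_imp_proportional assms(1-3) by metis
  then have "m1 \<noteq> 0" "m2 \<noteq> 0" using assms(4,5) by (cases ?F; auto)+
  then show False using assms(6) m form_locus_scale by simp
qed

lemma mob_eq_of_form_act_eq:
  assumes "M \<in> SL2Z" "M' \<in> SL2Z" "form_act Q1 M = form_act Q1 M'" "form_act Q2 M = form_act Q2 M'"
    "of_int_form Q1 \<noteq> (0,0,0)" "of_int_form Q2 \<noteq> (0,0,0)"
    "form_locus (of_int_form Q1) \<noteq> form_locus (of_int_form Q2)"
  shows "mob M = mob M'"
proof -
  define g where "g = imat_mult M (imat_adj M')"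
  have g: "g \<in> SL2Z" unfolding g_def using imat_mult_SL2Z imat_adj_SL2Z assms(1,2) by blast
  have "form_act (of_int_form Q) g = of_int_form Q" if "form_act Q M = form_act Q M'" for Q
  proof -
    have "form_act Q g = form_act (form_act Q M') (imat_adj M')"
      unfolding g_def form_act_imat_mult that ..
    also have "\<dots> = Q" unfolding form_act_imat_mult[symmetric] imat_mult_adj[OF assms(2)] by simp
    finally show ?thesis by (simp add: form_act_of_int)
  qed
  then have "g \<in> {(1,0,0,1), (-1,0,0,-1)}"
    using SL2Z_fixing_two_geodesics[OF g _ _ assms(5-7)] assms(3,4) by blast
  moreover have "imat_mult g M' = M" unfolding g_def imat_mult_assoc imat_adj_mult[OF assms(2)] by simp
  ultimately have "M = M' \<or> M = imat_uminus M'" by (cases M') auto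
  then show ?thesis using mob_imat_uminus by metis
qed

lemma comb_dist_le_card_int_cube:
  assumes Q: "hyperbolic_disc_le D Q1" "hyperbolic_disc_le D Q2"
    and distinct: "form_locus (of_int_form Q1) \<noteq> form_locus (of_int_form Q2)"
    and f: "f1 \<in> refl_group" "f2 \<in> refl_group"
    and meets: "\<And>Q f. Q \<in> {Q1, Q2} \<Longrightarrow> f \<in> {f1, f2} \<Longrightarrow> form_locus (of_int_form Q) \<inter> f ` T0 \<noteq> {}"
  shows "comb_dist f1 f2 \<le> card (int_cube D \<times> int_cube D)"
proof -
  obtain M1 where M1: "M1 \<in> SL2Z" "f1 T0_center = mob M1 T0_center" "f1 ` T0 \<subseteq> mob M1 ` T0"
    using tile_mob[OF f(1)] by blast
  obtain M2 where M2: "M2 \<in> SL2Z" "f2 T0_center = mob M2 T0_center" "f2 ` T0 \<subseteq> mob M2 ` T0"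
    using tile_mob[OF f(2)] by blast
  have meets_tiles: "form_locus (of_int_form Q) \<inter> mob M1 ` T0 \<noteq> {}"
    "form_locus (of_int_form Q) \<inter> mob M2 ` T0 \<noteq> {}" if "Q \<in> {Q1, Q2}" for Q
    using meets[OF that] M1(3) M2(3) by blast+
  define X where "X = {E \<in> tiling_edges. E \<inter> hseg (f1 T0_center) (f2 T0_center) \<noteq> {}}"
  define edge_mat where "edge_mat E = (SOME M. M \<in> SL2Z \<and> E = mob M ` vline 0)" for E
  have edge_mat: "edge_mat E \<in> SL2Z" "E = mob (edge_mat E) ` vline 0" if "E \<in> tiling_edges" for E
    using someI_ex[of "\<lambda>M. M \<in> SL2Z \<and> E = mob M ` vline 0"] tiling_edge_mob[OF that]
    unfolding edge_mat_def by blast+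
  define forms where "forms E = (form_act Q1 (edge_mat E), form_act Q2 (edge_mat E))" for E
  have "inj_on forms X"
  proof (rule inj_onI)
    fix E E' assume "E \<in> X" "E' \<in> X" "forms E = forms E'"
    then show "E = E'"
      using mob_eq_of_form_act_eq[OF edge_mat(1) edge_mat(1) _ _ hyperbolic_disc_le_nonzero[OF Q(1)]
          hyperbolic_disc_le_nonzero[OF Q(2)] distinct] edge_mat(2)
      unfolding X_def forms_def by (metis (no_types, lifting) mem_Collect_eq prod.inject)
  qed
  moreover have "forms ` X \<subseteq> int_cube D \<times> int_cube D"
  proof (clarsimp simp: forms_def)
    fix E assume "E \<in> X"
    then have "E \<in> tiling_edges" "mob (edge_mat E) ` vline 0 \<inter> hseg (mob M1 T0_center) (mob M2 T0_center) \<noteq> {}"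
      using edge_mat M1(2) M2(2) unfolding X_def by auto
    then show "form_act Q1 (edge_mat E) \<in> int_cube D \<and> form_act Q2 (edge_mat E) \<in> int_cube D"
      using crossed_edge_form_in_int_cube[OF _ M1(1) M2(1) edge_mat(1) meets_tiles] Q by blast
  qed
  moreover have "finite (int_cube D \<times> int_cube D)" by (simp add: int_cube_def)
  ultimately show ?thesis unfolding comb_dist_def X_def[symmetric] by (rule card_inj_on_le)
qed

theorem mainTheorem12:
  fixes \<Gamma> :: "complex set set"
  assumes "modular_pattern \<Gamma>"
  shows "\<exists>m::int. \<forall>f1\<in>refl_group. \<forall>f2\<in>refl_group.
           int (comb_dist f1 f2) \<ge> m \<longrightarrow>
           (\<forall>L1\<in>\<Gamma>. \<forall>L2\<in>\<Gamma>.
              L1 \<inter> f1 ` T0 \<noteq> {} \<and> L1 \<inter> f2 ` T0 \<noteq> {} \<and>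
              L2 \<inter> f1 ` T0 \<noteq> {} \<and> L2 \<inter> f2 ` T0 \<noteq> {} \<longrightarrow> L1 = L2)"
proof -
  obtain D where D: "\<forall>L\<in>\<Gamma>. \<exists>Q. L = form_locus (of_int_form Q) \<and> hyperbolic_disc_le D Q"
    using modular_pattern_bounded_forms[OF assms] by blast
  show ?thesis
  proof (intro exI[of _ "int (card (int_cube D \<times> int_cube D)) + 1"] ballI impI)
    fix f1 f2 L1 L2
    assume f: "f1 \<in> refl_group" "f2 \<in> refl_group"
      and far: "int (comb_dist f1 f2) \<ge> int (card (int_cube D \<times> int_cube D)) + 1"
      and L: "L1 \<in> \<Gamma>" "L2 \<in> \<Gamma>"
      and meets: "L1 \<inter> f1 ` T0 \<noteq> {} \<and> L1 \<inter> f2 ` T0 \<noteq> {} \<and> L2 \<inter> f1 ` T0 \<noteq> {} \<and> L2 \<inter> f2 ` T0 \<noteq> {}"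
    obtain Q1 Q2 where Q: "L1 = form_locus (of_int_form Q1)" "hyperbolic_disc_le D Q1"
      "L2 = form_locus (of_int_form Q2)" "hyperbolic_disc_le D Q2"
      using D L by meson
    show "L1 = L2"
    proof (rule ccontr)
      assume "L1 \<noteq> L2"
      then have "comb_dist f1 f2 \<le> card (int_cube D \<times> int_cube D)"
        using comb_dist_le_card_int_cube[OF Q(2,4) _ f] meets Q(1,3) by auto
      then show False using far by simp
    qed
  qed
qed

end
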